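(* Let $X_1$ be a real random variable with c.d.f. $F$ and mean $\mu$, let $p\geq1$, and let $0<a<b<1$, $\xi:=1-(b-a)$. Then \[\nu_p^{(a,b)}\leq\left(\frac{1}{(1-\xi)^{1/p}}+\frac{\xi^{\frac{p-1}{p}}}{1-\xi}\right)\nu_p.\]
   Context: $\nu_p:=(\mathbb{E}|X_1-\mu|^p)^{1/p}$. $F^{-1}(u):=\inf\{t:F(t)\ge u\}$. $\mu^{(a,b)}:=\frac1{b-a}\int_a^bF^{-1}(u)du$ and $\nu_p^{(a,b)}:=\left(\frac1{b-a}\int_a^b|F^{-1}(u)-\mu^{(a,b)}|^pdu\right)^{1/p}$, i.e. the $p$-th centered absolute moment of $F^{-1}(U)$ with $U$ uniform on $(a,b)$. *)

theory Defs
  imports "HOL-Probability.Probability"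
begin

definition cdf_of :: "'a measure \<Rightarrow> ('a \<Rightarrow> real) \<Rightarrow> real \<Rightarrow> real" where
  "cdf_of M X t = measure M {x \<in> space M. X x \<le> t}"

definition quantile :: "(real \<Rightarrow> real) \<Rightarrow> real \<Rightarrow> real" where
  "quantile F u = Inf {t. u \<le> F t}"

definition trimmed_mean :: "(real \<Rightarrow> real) \<Rightarrow> real \<Rightarrow> real \<Rightarrow> real" where
  "trimmed_mean F a b = (1 / (b - a)) * (LBINT u:{a..b}. quantile F u)"

definition trimmed_nu :: "real \<Rightarrow> (real \<Rightarrow> real) \<Rightarrow> real \<Rightarrow> real \<Rightarrow> real" where
  "trimmed_nu p F a b =
     ((1 / (b - a)) * (LBINT u:{a..b}. \<bar>quantile F u - trimmed_mean F a b\<bar> powr p)) powr (1 / p)"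

definition central_abs_moment_root :: "real \<Rightarrow> 'a measure \<Rightarrow> ('a \<Rightarrow> real) \<Rightarrow> real" where
  "central_abs_moment_root p M X =
     (\<integral>x. \<bar>X x - (\<integral>y. X y \<partial>M)\<bar> powr p \<partial>M) powr (1 / p)"

end

theory Submission
  imports Defs
begin

text \<open>
  With \<open>U\<close> uniform on \<open>(0,1)\<close>, the quantile function \<open>Q = F\<^sup>-\<^sup>1\<close> gives \<open>Q(U)\<close> the law of \<open>X\<^sub>1\<close>, and
  the trimmed quantities are the conditional mean and \<open>p\<close>-th central moment of \<open>Q(U)\<close> on the
  event \<open>S = {a \<le> U \<le> b}\<close> of probability \<open>1 - \<xi>\<close>. The bound holds for every such event: as \<open>Q(U) - \<mu>\<close> has
  mean zero, its integral over \<open>S\<close> is minus its integral over the complement, of probability \<open>\<xi>\<close>, so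
  by Hoelder the conditional mean \<open>m\<close> satisfies \<open>(1 - \<xi>) \<bar>m - \<mu>\<bar> \<le> \<xi>\<^bsup>(p-1)/p\<^esup> \<nu>\<^sub>p\<close>.
  Minkowski's inequality on \<open>S\<close> then bounds the conditional \<open>L\<^sup>p\<close> distance from \<open>m\<close> by the one
  from \<open>\<mu>\<close>, at most \<open>\<nu>\<^sub>p / (1 - \<xi>)\<^bsup>1/p\<^esup>\<close>, plus \<open>\<bar>m - \<mu>\<bar>\<close>.
\<close>

lemma powr_ge_tangent:
  fixes p c s :: real
  assumes p: "1 \<le> p" and c: "0 < c" and s: "0 \<le> s"
  shows "c powr p + p * c powr (p - 1) * (s - c) \<le> s powr p"
proof (cases "s = 0")
  case True
  have "c powr p + p * c powr (p - 1) * (0 - c) = (1 - p) * c powr p"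
    using c by (simp add: powr_diff algebra_simps)
  also have "\<dots> \<le> 0" using p c by (simp add: mult_nonpos_nonneg)
  finally show ?thesis using True by simp
next
  case False
  have d: "((\<lambda>x. x powr p) has_field_derivative p * c powr (p - 1)) (at c within {0<..})"
    using c by (auto intro!: derivative_eq_intros)
  have "p * c powr (p - 1) * (s - c) \<le> s powr p - c powr p"
    by (rule convex_on_imp_above_tangent[OF powr_convex[OF p] _ _ _ d])
       (use c s False in \<open>auto simp: interior_open\<close>)
  then show ?thesis by simp
qed

lemma powr_inverse_le_iff:
  fixes p x y :: real
  assumes p: "0 < p" and x: "0 \<le> x" and y: "0 \<le> y"
  shows "x powr (1 / p) \<le> y \<longleftrightarrow> x \<le> y powr p"
proof
  assume "x powr (1 / p) \<le> y"
  then have "(x powr (1 / p)) powr p \<le> y powr p"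
    using p by (intro powr_mono2) auto
  then show "x \<le> y powr p"
    using p x by (simp add: powr_powr powr_one)
next
  assume "x \<le> y powr p"
  then have "x powr (1 / p) \<le> (y powr p) powr (1 / p)"
    using p x by (intro powr_mono2) auto
  then show "x powr (1 / p) \<le> y"
    using p y by (simp add: powr_powr powr_one)
qed

lemma abs_add_powr_le_split:
  fixes p t x y :: real
  assumes p: "1 \<le> p" and t: "0 < t" "t < 1"
  shows "\<bar>x + y\<bar> powr p \<le> (1 - t) powr (1 - p) * \<bar>x\<bar> powr p + t powr (1 - p) * \<bar>y\<bar> powr p"
proof -
  define u where "u = \<bar>x\<bar> / (1 - t)"
  define v where "v = \<bar>y\<bar> / t"
  define z where "z = (1 - t) * u + t * v"
  have u: "0 \<le> u" and v: "0 \<le> v" and z: "z = \<bar>x\<bar> + \<bar>y\<bar>"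
    using t by (auto simp: u_def v_def z_def)
  have "\<bar>x + y\<bar> powr p \<le> z powr p"
    using z p by (auto intro!: powr_mono2 abs_triangle_ineq)
  also have "z powr p \<le> (1 - t) * u powr p + t * v powr p"
  proof (cases "z = 0")
    case True
    then show ?thesis using u v t by simp
  next
    case False
    then have "0 < z" using z by simp
    \<comment> \<open>average the tangent lines of \<open>s powr p\<close> at \<open>z\<close>, taken at \<open>u\<close> and \<open>v\<close>\<close>
    from powr_ge_tangent[OF p this u] powr_ge_tangent[OF p this v] t
    have "(1 - t) * (z powr p + p * z powr (p - 1) * (u - z))
          + t * (z powr p + p * z powr (p - 1) * (v - z))
        \<le> (1 - t) * u powr p + t * v powr p"
      by (intro add_mono mult_left_mono) auto
    also have "(1 - t) * (z powr p + p * z powr (p - 1) * (u - z))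
          + t * (z powr p + p * z powr (p - 1) * (v - z)) = z powr p"
      unfolding z_def by (simp add: algebra_simps)
    finally show ?thesis .
  qed
  also have "(1 - t) * u powr p = (1 - t) powr (1 - p) * \<bar>x\<bar> powr p"
    using t by (simp add: u_def powr_divide powr_diff field_simps)
  also have "t * v powr p = t powr (1 - p) * \<bar>y\<bar> powr p"
    using t by (simp add: v_def powr_divide powr_diff field_simps)
  finally show ?thesis .
qed

lemma powr_optimal_split:
  fixes A B p :: real
  assumes A: "0 < A" and B: "0 < B"
  shows "(A / (A + B)) powr (1 - p) * A powr p + (B / (A + B)) powr (1 - p) * B powr p = (A + B) powr p"
proof -
  have weight: "(C / D) powr (1 - p) * C powr p = D powr (p - 1) * C" if "0 < C" "0 < D" for C D
    using that by (simp add: powr_divide powr_diff field_simps)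
  have "(A / (A + B)) powr (1 - p) * A powr p + (B / (A + B)) powr (1 - p) * B powr p
      = (A + B) powr (p - 1) * (A + B)"
    using A B by (simp only: weight add_pos_pos distrib_left)
  also have "\<dots> = (A + B) powr p"
    using A B by (simp add: mult.commute[of _ "A + B"] powr_mult_base)
  finally show ?thesis .
qed

lemma integrable_imp_set_integrable:
  fixes f :: "'a \<Rightarrow> 'b::{banach, second_countable_topology}"
  shows "integrable M f \<Longrightarrow> A \<in> sets M \<Longrightarrow> set_integrable M A f"
  unfolding set_integrable_def by (rule integrable_mult_indicator)

lemma set_integral_le_integral:
  fixes g :: "'a \<Rightarrow> real"
  assumes "A \<in> sets M" and "integrable M g" and "\<And>x. 0 \<le> g x"
  shows "(LINT x:A|M. g x) \<le> (\<integral>x. g x \<partial>M)"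
  using integrable_imp_set_integrable[OF assms(2,1)] assms
  unfolding set_lebesgue_integral_def set_integrable_def
  by (intro integral_mono) (auto simp: indicator_def)

context finite_measure
begin

lemma set_integrable_const [simp, intro]:
  fixes c :: "'b::{banach, second_countable_topology}"
  shows "A \<in> sets M \<Longrightarrow> set_integrable M A (\<lambda>_. c)"
  unfolding set_integrable_def by (rule integrable_mult_indicator) simp_all

lemma set_integral_powr_ge_tangent:
  fixes f :: "'a \<Rightarrow> real"
  assumes p: "1 \<le> p" and c: "0 < c" and A: "A \<in> sets M"
    and G_int: "set_integrable M A (\<lambda>x. \<bar>f x\<bar>)" and Vp_int: "set_integrable M A (\<lambda>x. \<bar>f x\<bar> powr p)"
  shows "c powr p * measure M A + p * c powr (p - 1) * ((LINT x:A|M. \<bar>f x\<bar>) - c * measure M A)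
    \<le> (LINT x:A|M. \<bar>f x\<bar> powr p)"
proof -
  have "(LINT x:A|M. c powr p + p * c powr (p - 1) * (\<bar>f x\<bar> - c)) \<le> (LINT x:A|M. \<bar>f x\<bar> powr p)"
    using powr_ge_tangent[OF p c] G_int Vp_int A
    by (intro set_integral_mono set_integral_add set_integral_diff set_integrable_mult_right
        set_integrable_const) auto
  then show ?thesis
    using A G_int by (simp add: set_integral_const algebra_simps)
qed

lemma set_integral_abs_le_Lp_norm:
  fixes f :: "'a \<Rightarrow> real"
  assumes p: "1 \<le> p" and A: "A \<in> sets M"
    and f: "integrable M f" and fp: "integrable M (\<lambda>x. \<bar>f x\<bar> powr p)"
  shows "(LINT x:A|M. \<bar>f x\<bar>) \<le> measure M A powr ((p - 1) / p) * (\<integral>x. \<bar>f x\<bar> powr p \<partial>M) powr (1 / p)"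
    (is "?G \<le> ?\<xi> powr _ * ?V powr _")
proof -
  have G_int: "set_integrable M A (\<lambda>x. \<bar>f x\<bar>)"
    using A f by (intro integrable_imp_set_integrable integrable_abs)
  have Vp_int: "set_integrable M A (\<lambda>x. \<bar>f x\<bar> powr p)"
    using A fp by (rule integrable_imp_set_integrable[rotated])
  have G_0: "?G = 0" if "AE x in M. indicator A x * \<bar>f x\<bar> = 0"
    unfolding set_lebesgue_integral_def using that by (simp add: integral_eq_zero_AE)
  have "0 \<le> ?V" by (rule Bochner_Integration.integral_nonneg) simp
  then consider "?V = 0" | "?\<xi> = 0" | "0 < ?V" "0 < ?\<xi>"
    using measure_nonneg[of M A] by linarith
  then show ?thesis
  proof cases
    case 1
    then have "AE x in M. \<bar>f x\<bar> powr p = 0"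
      using fp by (subst integral_nonneg_eq_0_iff_AE[symmetric]) auto
    then show ?thesis
      by (simp add: G_0 eventually_mono)
  next
    case 2
    then have "AE x in M. x \<notin> A"
      using A by (intro AE_not_in null_setsI) (simp_all add: emeasure_eq_measure)
    then show ?thesis
      by (simp add: G_0 eventually_mono)
  next
    case 3
    \<comment> \<open>integrate the tangent line of \<open>s powr p\<close> at the point \<open>c\<close> where \<open>c powr p * ?\<xi> = ?V\<close>\<close>
    define c where "c = (?V / ?\<xi>) powr (1 / p)"
    have c: "0 < c" and cp: "c powr p * ?\<xi> = ?V"
      using 3 p by (auto simp: c_def powr_powr)
    have "c powr p * ?\<xi> + p * c powr (p - 1) * (?G - c * ?\<xi>) \<le> (LINT x:A|M. \<bar>f x\<bar> powr p)"
      by (rule set_integral_powr_ge_tangent[OF p c A G_int Vp_int])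
    also have "\<dots> \<le> ?V"
      using A fp by (rule set_integral_le_integral) simp
    finally have "?G \<le> c * ?\<xi>"
      using cp p c by (simp add: mult_le_0_iff)
    also have "c * ?\<xi> = ?\<xi> powr ((p - 1) / p) * ?V powr (1 / p)"
    proof -
      have "?\<xi> powr (1 / p) * ?\<xi> powr ((p - 1) / p) = ?\<xi>"
        using 3 p by (simp add: powr_add[symmetric] diff_divide_distrib)
      then show ?thesis
        using 3 by (simp add: c_def powr_divide field_simps)
    qed
    finally show ?thesis .
  qed
qed

lemma set_integral_abs_add_const_powr_le_split:
  fixes f :: "'a \<Rightarrow> real"
  assumes p: "1 \<le> p" and t: "0 < t" "t < 1" and S: "S \<in> sets M"
    and f[measurable]: "f \<in> borel_measurable M" and fp: "set_integrable M S (\<lambda>x. \<bar>f x\<bar> powr p)"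
  shows "set_integrable M S (\<lambda>x. \<bar>f x + c\<bar> powr p)"
    and "(LINT x:S|M. \<bar>f x + c\<bar> powr p)
      \<le> (1 - t) powr (1 - p) * (LINT x:S|M. \<bar>f x\<bar> powr p) + t powr (1 - p) * (\<bar>c\<bar> powr p * measure M S)"
proof -
  let ?split = "\<lambda>x. (1 - t) powr (1 - p) * \<bar>f x\<bar> powr p + t powr (1 - p) * \<bar>c\<bar> powr p"
  have split_int: "set_integrable M S ?split"
    using fp S by (intro set_integral_add set_integrable_mult_right set_integrable_const)
  show L_int: "set_integrable M S (\<lambda>x. \<bar>f x + c\<bar> powr p)"
  proof (rule set_integrable_bound[OF split_int])
    show "set_borel_measurable M S (\<lambda>x. \<bar>f x + c\<bar> powr p)"
      using S unfolding set_borel_measurable_def by measurable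
    show "AE x in M. x \<in> S \<longrightarrow> norm (\<bar>f x + c\<bar> powr p) \<le> norm (?split x)"
      using abs_add_powr_le_split[OF p t] by (auto intro!: AE_I2 order_trans[OF _ abs_ge_self])
  qed
  have "(LINT x:S|M. \<bar>f x + c\<bar> powr p) \<le> (LINT x:S|M. ?split x)"
    using abs_add_powr_le_split[OF p t] by (intro set_integral_mono L_int split_int)
  also have "\<dots> = (1 - t) powr (1 - p) * (LINT x:S|M. \<bar>f x\<bar> powr p)
      + t powr (1 - p) * (\<bar>c\<bar> powr p * measure M S)"
    using fp S by (simp add: set_integral_const)
  finally show "(LINT x:S|M. \<bar>f x + c\<bar> powr p)
      \<le> (1 - t) powr (1 - p) * (LINT x:S|M. \<bar>f x\<bar> powr p) + t powr (1 - p) * (\<bar>c\<bar> powr p * measure M S)" .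
qed

lemma Minkowski_set_integral_add_const:
  fixes f :: "'a \<Rightarrow> real"
  assumes p: "1 \<le> p" and S: "S \<in> sets M" and f[measurable]: "f \<in> borel_measurable M"
    and fp: "set_integrable M S (\<lambda>x. \<bar>f x\<bar> powr p)"
  shows "(LINT x:S|M. \<bar>f x + c\<bar> powr p) powr (1 / p)
    \<le> (LINT x:S|M. \<bar>f x\<bar> powr p) powr (1 / p) + \<bar>c\<bar> * measure M S powr (1 / p)"
    (is "?L powr _ \<le> ?N + ?C")
proof -
  \<comment> \<open>the slack \<open>e\<close> below keeps \<open>A\<close> and \<open>B\<close> positive\<close>
  have L_le: "?L \<le> (A + B) powr p"
    if A: "0 < A" "(LINT x:S|M. \<bar>f x\<bar> powr p) \<le> A powr p"
      and B: "0 < B" "\<bar>c\<bar> powr p * measure M S \<le> B powr p" for A B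
  proof -
    have t: "0 < B / (A + B)" "B / (A + B) < 1" and one_minus_t: "1 - B / (A + B) = A / (A + B)"
      using A B by (auto simp: field_simps)
    note split = set_integral_abs_add_const_powr_le_split[OF p t S f fp, of c]
    have "?L \<le> (A / (A + B)) powr (1 - p) * A powr p + (B / (A + B)) powr (1 - p) * B powr p"
      using A B by (intro order_trans[OF split(2)[unfolded one_minus_t]] add_mono mult_left_mono) auto
    also have "\<dots> = (A + B) powr p"
      by (rule powr_optimal_split[OF A(1) B(1)])
    finally show ?thesis .
  qed
  have L_nonneg: "0 \<le> ?L" and I_nonneg: "0 \<le> (LINT x:S|M. \<bar>f x\<bar> powr p)"
    using S unfolding set_lebesgue_integral_def
    by (auto intro!: Bochner_Integration.integral_nonneg)
  have p_pos: "0 < p" using p by simp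
  show ?thesis
  proof (rule field_le_epsilon)
    fix e :: real assume "0 < e"
    have "?L \<le> (?N + e / 2 + (?C + e / 2)) powr p"
    proof (rule L_le)
      show "(LINT x:S|M. \<bar>f x\<bar> powr p) \<le> (?N + e / 2) powr p"
        using \<open>0 < e\<close> I_nonneg by (subst powr_inverse_le_iff[OF p_pos, symmetric]) auto
      have "(\<bar>c\<bar> powr p * measure M S) powr (1 / p) = ?C"
        using p_pos by (simp add: powr_mult powr_powr)
      then show "\<bar>c\<bar> powr p * measure M S \<le> (?C + e / 2) powr p"
        using \<open>0 < e\<close> by (subst powr_inverse_le_iff[OF p_pos, symmetric]) auto
    qed (use \<open>0 < e\<close> in \<open>auto intro!: add_nonneg_pos\<close>)
    then have "?L powr (1 / p) \<le> ?N + e / 2 + (?C + e / 2)"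
      using L_nonneg \<open>0 < e\<close> by (subst powr_inverse_le_iff[OF p_pos]) auto
    then show "?L powr (1 / p) \<le> ?N + ?C + e" by simp
  qed
qed

end

lemma same_distr_integral:
  fixes h :: "real \<Rightarrow> real"
  assumes distr: "distr M borel X = distr N borel Y"
    and [measurable]: "X \<in> borel_measurable M" "Y \<in> borel_measurable N" "h \<in> borel_measurable borel"
  shows "integrable M (\<lambda>x. h (X x)) \<longleftrightarrow> integrable N (\<lambda>y. h (Y y))"
    and "(\<integral>x. h (X x) \<partial>M) = (\<integral>y. h (Y y) \<partial>N)"
proof -
  have "integrable M (\<lambda>x. h (X x)) \<longleftrightarrow> integrable (distr M borel X) h"
    by (rule integrable_distr_eq[symmetric]) measurable
  also have "\<dots> \<longleftrightarrow> integrable N (\<lambda>y. h (Y y))"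
    unfolding distr by (rule integrable_distr_eq) measurable
  finally show "integrable M (\<lambda>x. h (X x)) \<longleftrightarrow> integrable N (\<lambda>y. h (Y y))" .
  have "(\<integral>x. h (X x) \<partial>M) = integral\<^sup>L (distr M borel X) h"
    by (rule integral_distr[symmetric]) measurable
  also have "\<dots> = (\<integral>y. h (Y y) \<partial>N)"
    unfolding distr by (rule integral_distr) measurable
  finally show "(\<integral>x. h (X x) \<partial>M) = (\<integral>y. h (Y y) \<partial>N)" .
qed

lemma set_integral_restrict_space_subset:
  fixes f :: "'a \<Rightarrow> 'b::{banach, second_countable_topology}"
  assumes "\<Omega> \<inter> space M \<in> sets M" and "A \<subseteq> \<Omega>"
  shows "(LINT x:A|restrict_space M \<Omega>. f x) = (LINT x:A|M. f x)"
  unfolding set_integral_restrict_space[OF assms(1)] unfolding set_lebesgue_integral_def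
  by (rule Bochner_Integration.integral_cong) (use assms(2) in \<open>auto split: split_indicator\<close>)

lemma prob_space_unit_interval: "prob_space (restrict_space lborel {0<..<1::real})"
  by (auto simp: emeasure_restrict_space space_restrict_space intro!: prob_spaceI)

lemma quantile_cdf_of_distributed:
  fixes M :: "'a measure" and X :: "'a \<Rightarrow> real"
  assumes "prob_space M" and X: "X \<in> borel_measurable M"
  shows "quantile (cdf_of M X) \<in> borel_measurable (restrict_space lborel {0<..<1})"
    and "distr (restrict_space lborel {0<..<1}) borel (quantile (cdf_of M X)) = distr M borel X"
proof -
  interpret M: prob_space M by fact
  interpret C: cdf_distribution "distr M borel X"
    using X by (auto simp: cdf_distribution_def real_distribution_def real_distribution_axioms_def
        intro: M.prob_space_distr)
  have "cdf (distr M borel X) = cdf_of M X"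
    using X by (auto simp: fun_eq_iff cdf_def cdf_of_def measure_distr vimage_def Int_def conj_commute)
  then have Q: "quantile (cdf_of M X) = (\<lambda>\<omega>. Inf {x. \<omega> \<le> C.C x})"
    by (simp add: quantile_def fun_eq_iff)
  have "sets (restrict_space borel {0<..<1::real}) = sets (restrict_space lborel {0<..<1})"
    by (simp add: sets_restrict_space)
  then show "quantile (cdf_of M X) \<in> borel_measurable (restrict_space lborel {0<..<1})"
    unfolding Q using C.measurable_CI measurable_cong_sets by blast
  show "distr (restrict_space lborel {0<..<1}) borel (quantile (cdf_of M X)) = distr M borel X"
    unfolding Q by (rule C.distr_I_eq_M)
qed

context prob_space
begin

lemma set_average_deviation_le:
  fixes Y :: "'a \<Rightarrow> real"
  assumes p: "1 \<le> p" and S: "S \<in> events" and PS: "0 < prob S"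
    and Y: "integrable M Y" and Yp: "integrable M (\<lambda>x. \<bar>Y x - expectation Y\<bar> powr p)"
  shows "\<bar>(LINT x:S|M. Y x) / prob S - expectation Y\<bar>
    \<le> (1 - prob S) powr ((p - 1) / p) / prob S
      * expectation (\<lambda>x. \<bar>Y x - expectation Y\<bar> powr p) powr (1 / p)"
proof -
  let ?\<mu> = "expectation Y"
  have f: "integrable M (\<lambda>x. Y x - ?\<mu>)"
    using Y by simp
  have set_int: "set_integrable M A (\<lambda>x. Y x - ?\<mu>)" if "A \<in> events" for A
    using f that by (rule integrable_imp_set_integrable)
  have "(LINT x:S|M. Y x - ?\<mu>) + (LINT x:space M - S|M. Y x - ?\<mu>) = (LINT x:space M|M. Y x - ?\<mu>)"
    using S set_int sets.sets_into_space[OF S] by (subst set_integral_Un[symmetric]) (auto simp: Un_absorb1)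
  also have "\<dots> = 0"
    using f Y by (simp add: set_integral_space prob_space)
  finally have "\<bar>LINT x:S|M. Y x - ?\<mu>\<bar> = \<bar>LINT x:space M - S|M. Y x - ?\<mu>\<bar>"
    by linarith
  also have "\<dots> \<le> (LINT x:space M - S|M. \<bar>Y x - ?\<mu>\<bar>)"
    using set_integral_norm_bound[OF set_int] S by simp
  also have "\<dots> \<le> prob (space M - S) powr ((p - 1) / p)
      * expectation (\<lambda>x. \<bar>Y x - ?\<mu>\<bar> powr p) powr (1 / p)"
    using S by (intro set_integral_abs_le_Lp_norm[OF p _ f Yp]) auto
  finally have "\<bar>LINT x:S|M. Y x - ?\<mu>\<bar>
      \<le> (1 - prob S) powr ((p - 1) / p) * expectation (\<lambda>x. \<bar>Y x - ?\<mu>\<bar> powr p) powr (1 / p)"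
    using S by (simp add: prob_compl)
  moreover have "(LINT x:S|M. Y x) / prob S - ?\<mu> = (LINT x:S|M. Y x - ?\<mu>) / prob S"
  proof -
    have "set_integrable M S Y"
      using Y S by (rule integrable_imp_set_integrable)
    then show ?thesis
      using S PS by (simp add: set_integral_diff set_integral_const field_simps)
  qed
  ultimately show ?thesis
    using PS by (simp add: divide_right_mono)
qed

lemma set_central_moment_le:
  fixes Y :: "'a \<Rightarrow> real"
  assumes p: "1 \<le> p" and S: "S \<in> events" and PS: "0 < prob S"
    and Y: "integrable M Y" and Yp: "integrable M (\<lambda>x. \<bar>Y x - expectation Y\<bar> powr p)"
  shows "((LINT x:S|M. \<bar>Y x - (LINT y:S|M. Y y) / prob S\<bar> powr p) / prob S) powr (1 / p)
    \<le> (1 / prob S powr (1 / p) + (1 - prob S) powr ((p - 1) / p) / prob S)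
      * expectation (\<lambda>x. \<bar>Y x - expectation Y\<bar> powr p) powr (1 / p)"
proof -
  let ?\<mu> = "expectation Y" and ?m = "(LINT y:S|M. Y y) / prob S"
  let ?\<nu> = "expectation (\<lambda>x. \<bar>Y x - ?\<mu>\<bar> powr p) powr (1 / p)"
  have "(LINT x:S|M. \<bar>Y x - ?m\<bar> powr p) powr (1 / p)
      = (LINT x:S|M. \<bar>(Y x - ?\<mu>) + (?\<mu> - ?m)\<bar> powr p) powr (1 / p)"
    by simp
  also have "\<dots> \<le> (LINT x:S|M. \<bar>Y x - ?\<mu>\<bar> powr p) powr (1 / p) + \<bar>?\<mu> - ?m\<bar> * prob S powr (1 / p)"
    using S Y Yp by (intro Minkowski_set_integral_add_const[OF p]) (auto intro: integrable_imp_set_integrable)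
  also have "(LINT x:S|M. \<bar>Y x - ?\<mu>\<bar> powr p) \<le> expectation (\<lambda>x. \<bar>Y x - ?\<mu>\<bar> powr p)"
    using S Yp by (rule set_integral_le_integral) simp
  then have "(LINT x:S|M. \<bar>Y x - ?\<mu>\<bar> powr p) powr (1 / p) \<le> ?\<nu>"
    using p S unfolding set_lebesgue_integral_def
    by (intro powr_mono2) (auto intro!: Bochner_Integration.integral_nonneg)
  finally have "(LINT x:S|M. \<bar>Y x - ?m\<bar> powr p) powr (1 / p) / prob S powr (1 / p)
      \<le> (?\<nu> + \<bar>?\<mu> - ?m\<bar> * prob S powr (1 / p)) / prob S powr (1 / p)"
    by (rule divide_right_mono) auto
  also have "\<dots> = ?\<nu> / prob S powr (1 / p) + \<bar>?m - ?\<mu>\<bar>"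
    using PS by (simp add: add_divide_distrib abs_minus_commute)
  also have "\<bar>?m - ?\<mu>\<bar> \<le> (1 - prob S) powr ((p - 1) / p) / prob S * ?\<nu>"
    by (rule set_average_deviation_le[OF p S PS Y Yp])
  finally show ?thesis
    using PS S unfolding set_lebesgue_integral_def
    by (simp add: powr_divide Bochner_Integration.integral_nonneg distrib_right)
qed

end

theorem proposition4p3:
  fixes M :: "'a measure" and X :: "'a \<Rightarrow> real" and p a b :: real
  assumes "prob_space M"
    and "X \<in> borel_measurable M"
    and "integrable M X"
    and "integrable M (\<lambda>x. \<bar>X x - (\<integral>y. X y \<partial>M)\<bar> powr p)"
    and "1 \<le> p"
    and "0 < a" and "a < b" and "b < 1"
  shows "let \<xi> = 1 - (b - a) in
    trimmed_nu p (cdf_of M X) a b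
      \<le> (1 / ((1 - \<xi>) powr (1 / p)) + \<xi> powr ((p - 1) / p) / (1 - \<xi>))
          * central_abs_moment_root p M X"
proof -
  define \<Omega> where "\<Omega> = restrict_space lborel {0<..<1::real}"
  define Q where "Q = quantile (cdf_of M X)"
  define \<mu> where "\<mu> = (\<integral>y. X y \<partial>M)"
  interpret \<Omega>: prob_space \<Omega>
    unfolding \<Omega>_def by (rule prob_space_unit_interval)
  note Q = quantile_cdf_of_distributed[OF assms(1,2), folded \<Omega>_def Q_def]
  note transfer = same_distr_integral[OF Q(2) Q(1) assms(2)]
  have Q_int: "integrable \<Omega> Q" "\<Omega>.expectation Q = \<mu>"
    using transfer[of "\<lambda>x. x"] assms(3) by (simp_all add: \<mu>_def)
  have Qp_int: "integrable \<Omega> (\<lambda>u. \<bar>Q u - \<mu>\<bar> powr p)"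
    and Qp_eq: "\<Omega>.expectation (\<lambda>u. \<bar>Q u - \<mu>\<bar> powr p) = (\<integral>x. \<bar>X x - \<mu>\<bar> powr p \<partial>M)"
    using transfer[of "\<lambda>x. \<bar>x - \<mu>\<bar> powr p"] assms(4) by (simp_all add: \<mu>_def)
  have S: "{a..b} \<in> \<Omega>.events" "\<Omega>.prob {a..b} = b - a"
    using assms(6-8) unfolding \<Omega>_def
    by (auto simp: sets_restrict_space_iff) (subst measure_restrict_space; auto)
  have LBINT: "(LBINT u:{a..b}. g u) = (LINT u:{a..b}|\<Omega>. g u)" for g :: "real \<Rightarrow> real"
    unfolding \<Omega>_def using assms(6,8) by (subst set_integral_restrict_space_subset) auto
  show ?thesis
    using \<Omega>.set_central_moment_le[OF assms(5) S(1) _ Q_int(1)] Q_int(2) Qp_int Qp_eq S(2) assms(7)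
    by (simp add: Let_def trimmed_nu_def trimmed_mean_def central_abs_moment_root_def LBINT \<mu>_def Q_def)
qed

end
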